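(* Let $G$ be an $X-Y$ normalized graph. Each sequence $(S_1,\dots,S_r)$ of pairwise disjoint non-empty subsets of $V(G)$ is the attribute of at most one compound witness (with respect to $X$ and $Y$ in $G$).
   Context: $G$ is a finite undirected graph, $X,Y$ disjoint subsets of $V(G)$; $N(C)=(\bigcup_{v\in C}N(v))\setminus C$. An $X-Y$ separator is a set $K \subseteq V(G) \setminus (X \cup Y)$ such that $G \setminus K$ has no path from $X$ to $Y$; minimal means inclusion-minimal. A graph $H$ is $X-Y$ normalized if $N(X)$ is the only minimum-cardinality $X-Y$ separator of $H$. In $H$, let $r_H$ be the minimum size of an $X-Y$ separator; the excess of an $X-Y$ separator $K$ is $|K|-r_H$. $NR(H,Y,K)$ is the set of vertices not reachable from $Y$ in $H\setminus K$; $K \geq K'$ means $NR(H,Y,K)\supseteq NR(H,Y,K')$, $K'<K$ means $K\ge K'$ and the $NR$ sets differ. A minimal $X-Y$ separator $K$ is important if there is no $X-Y$ separator $K'$ with $K<K'$ and $|K|\ge |K'|$. For $S\subseteq N(X)$ with no vertex adjacent to $Y$, the cover excess $CE(S)$ is the excess of a smallest $X-Y$ separator disjoint from $S$; a witness of $S$ is an $X-Y$ separator disjoint from $S$ with excess $CE(S)$; in a normalized graph there is a unique witness of $S$ that is an important $X-Y$ separator, denoted $K(S)$. $Pr(H,X,Y,K)$ is the graph obtained from $H\setminus (NR(H,Y,K)\setminus X)$ by making $X$ adjacent to all vertices of $K$ (for $K$ important, it is $X-Y$ normalized). Compound witness: for an $X-Y$ normalized graph $H$, a sequence $(S_1,\dots,S_r)$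 of pairwise disjoint non-empty vertex sets and an $X-Y$ separator $K$, $K$ is a compound witness of the attribute $(S_1,\dots,S_r)$ w.r.t. $X,Y$ in $H$ if: when $r=1$, $S_1\subseteq N(X)$ and $K=K(S_1)$; when $r>1$, $K(S_1)$ is defined (i.e. $S_1\subseteq N(X)$, not adjacent to $Y$), $S_2\cup\dots\cup S_r$ is disjoint from $N(X)$, and $K$ is a compound witness of $(S_2,\dots,S_r)$ w.r.t. $X,Y$ in $Pr(H,X,Y,K(S_1))$. The rank of $K$ is $|S_1|+\dots+|S_r|$. *)

theory Defs
  imports Main
begin

type_synonym 'a graph = "'a set \<times> ('a \<times> 'a) set"

definition verts :: "'a graph \<Rightarrow> 'a set" where "verts G = fst G"
definition edges :: "'a graph \<Rightarrow> ('a \<times> 'a) set" where "edges G = snd G"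

definition fin_graph :: "'a graph \<Rightarrow> bool" where
  "fin_graph G \<longleftrightarrow> finite (verts G) \<and> edges G \<subseteq> verts G \<times> verts G
     \<and> sym (edges G) \<and> irrefl (edges G)"

definition nbh :: "'a graph \<Rightarrow> 'a set \<Rightarrow> 'a set" where
  "nbh G C = {v. \<exists>u\<in>C. (u, v) \<in> edges G} - C"

definition reach :: "'a graph \<Rightarrow> 'a set \<Rightarrow> 'a set \<Rightarrow> 'a set" where
  "reach G Y K = {v. \<exists>y\<in>Y. y \<in> verts G - K \<and>
      (y, v) \<in> (edges G \<inter> ((verts G - K) \<times> (verts G - K)))\<^sup>*}"

definition NR :: "'a graph \<Rightarrow> 'a set \<Rightarrow> 'a set \<Rightarrow> 'a set" where
  "NR G Y K = (verts G - K) - reach G Y K"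

definition separator :: "'a graph \<Rightarrow> 'a set \<Rightarrow> 'a set \<Rightarrow> 'a set \<Rightarrow> bool" where
  "separator G X Y K \<longleftrightarrow> K \<subseteq> verts G - (X \<union> Y) \<and> X \<inter> reach G Y K = {}"

definition minimal_separator :: "'a graph \<Rightarrow> 'a set \<Rightarrow> 'a set \<Rightarrow> 'a set \<Rightarrow> bool" where
  "minimal_separator G X Y K \<longleftrightarrow> separator G X Y K \<and>
     (\<forall>K'. K' \<subset> K \<longrightarrow> \<not> separator G X Y K')"

definition sep_num :: "'a graph \<Rightarrow> 'a set \<Rightarrow> 'a set \<Rightarrow> nat" where
  "sep_num G X Y = Min {card K | K. separator G X Y K}"

definition normalized :: "'a graph \<Rightarrow> 'a set \<Rightarrow> 'a set \<Rightarrow> bool" where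
  "normalized G X Y \<longleftrightarrow> separator G X Y (nbh G X) \<and> card (nbh G X) = sep_num G X Y \<and>
     (\<forall>K. separator G X Y K \<and> card K = sep_num G X Y \<longrightarrow> K = nbh G X)"

definition excess :: "'a graph \<Rightarrow> 'a set \<Rightarrow> 'a set \<Rightarrow> 'a set \<Rightarrow> nat" where
  "excess G X Y K = card K - sep_num G X Y"

definition important :: "'a graph \<Rightarrow> 'a set \<Rightarrow> 'a set \<Rightarrow> 'a set \<Rightarrow> bool" where
  "important G X Y K \<longleftrightarrow> minimal_separator G X Y K \<and>
     \<not> (\<exists>K'. separator G X Y K' \<and> NR G Y K \<subset> NR G Y K' \<and> card K' \<le> card K)"

definition cover_excess :: "'a graph \<Rightarrow> 'a set \<Rightarrow> 'a set \<Rightarrow> 'a set \<Rightarrow> nat" where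
  "cover_excess G X Y S = Min {excess G X Y K | K. separator G X Y K \<and> K \<inter> S = {}}"

definition witness :: "'a graph \<Rightarrow> 'a set \<Rightarrow> 'a set \<Rightarrow> 'a set \<Rightarrow> 'a set \<Rightarrow> bool" where
  "witness G X Y S K \<longleftrightarrow> separator G X Y K \<and> K \<inter> S = {} \<and>
     excess G X Y K = cover_excess G X Y S"

definition KS_defined :: "'a graph \<Rightarrow> 'a set \<Rightarrow> 'a set \<Rightarrow> 'a set \<Rightarrow> bool" where
  "KS_defined G X Y S \<longleftrightarrow> S \<subseteq> nbh G X \<and> (\<forall>s\<in>S. \<forall>y\<in>Y. (s, y) \<notin> edges G)"

text \<open>K is K(S): the important witness of S (stated relationally; its uniqueness
  in normalized graphs is a fact of the paper, not built into the definition).\<close>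
definition is_KS :: "'a graph \<Rightarrow> 'a set \<Rightarrow> 'a set \<Rightarrow> 'a set \<Rightarrow> 'a set \<Rightarrow> bool" where
  "is_KS G X Y S K \<longleftrightarrow> KS_defined G X Y S \<and> witness G X Y S K \<and> important G X Y K"

definition Pr :: "'a graph \<Rightarrow> 'a set \<Rightarrow> 'a set \<Rightarrow> 'a set \<Rightarrow> 'a graph" where
  "Pr G X Y K = (let R = NR G Y K - X in
     (verts G - R,
      {(u, v) \<in> edges G. u \<notin> R \<and> v \<notin> R} \<union> (X \<times> K) \<union> (K \<times> X)))"

fun compound_witness :: "'a graph \<Rightarrow> 'a set \<Rightarrow> 'a set \<Rightarrow> 'a set list \<Rightarrow> 'a set \<Rightarrow> bool" where
  "compound_witness G X Y [] K = False"
| "compound_witness G X Y [S] K = is_KS G X Y S K"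
| "compound_witness G X Y (S # S' # Ss) K =
     (KS_defined G X Y S \<and> \<Union> (set (S' # Ss)) \<inter> nbh G X = {} \<and>
      (\<exists>K1. is_KS G X Y S K1 \<and> compound_witness (Pr G X Y K1) X Y (S' # Ss) K))"

end

theory Submission
  imports Defs
begin

text \<open>Compound witnesses are built by iterating K(S) and Pr, so it suffices that K(S) is
unique. For separators K1, K2 the meet (K1 \<inter> K2) \<union> (K1 \<inter> NR K2) \<union> (K2 \<inter> NR K1) and the join
(K1 \<inter> K2) \<union> (K1 \<inter> reach K2) \<union> (K2 \<inter> reach K1) are again separators, their sizes add up to
|K1| + |K2|, and the join cuts off at least NR K1 \<union> NR K2. If K1 is an important witness of S
and K2 any witness of S, the meet avoids S, so it is no smaller than K1; hence the join is no
larger than K1, and importance forces NR K2 \<subseteq> NR K1. For two important witnesses the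
NR-sets therefore coincide, the meet collapses to K1 \<inter> K2, and minimality gives K1 = K2.\<close>

lemma reach_subset: "reach G Y K \<subseteq> verts G - K"
proof
  fix v assume "v \<in> reach G Y K"
  then obtain y where y: "y \<in> verts G - K"
    "(y, v) \<in> (edges G \<inter> ((verts G - K) \<times> (verts G - K)))\<^sup>*"
    unfolding reach_def by blast
  from y(2) show "v \<in> verts G - K"
    by (cases rule: rtranclE) (use y(1) in auto)
qed

lemma reach_edge:
  assumes "u \<in> reach G Y K" "(u, v) \<in> edges G" "v \<in> verts G" "v \<notin> K"
  shows "v \<in> reach G Y K"
proof -
  let ?E = "edges G \<inter> ((verts G - K) \<times> (verts G - K))"
  from assms(1) obtain y where y: "y \<in> Y" "y \<in> verts G - K" "(y, u) \<in> ?E\<^sup>*"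
    unfolding reach_def by blast
  have "(u, v) \<in> ?E" using assms reach_subset[of G Y K] by blast
  with y(3) have "(y, v) \<in> ?E\<^sup>*" by (rule rtrancl_into_rtrancl)
  with y(1,2) show ?thesis unfolding reach_def by blast
qed

lemma source_in_reach: "y \<in> Y \<Longrightarrow> y \<in> verts G \<Longrightarrow> y \<notin> K \<Longrightarrow> y \<in> reach G Y K"
  unfolding reach_def by blast

lemma reach_induct:
  assumes "\<And>y. y \<in> Y \<Longrightarrow> y \<in> verts G - K \<Longrightarrow> y \<in> P"
    and "\<And>u v. u \<in> P \<Longrightarrow> u \<in> verts G - K \<Longrightarrow> v \<in> verts G - K \<Longrightarrow> (u, v) \<in> edges G \<Longrightarrow> v \<in> P"
  shows "reach G Y K \<subseteq> P"
proof
  fix v assume "v \<in> reach G Y K"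
  then obtain y where y: "y \<in> Y" "y \<in> verts G - K"
    "(y, v) \<in> (edges G \<inter> ((verts G - K) \<times> (verts G - K)))\<^sup>*"
    unfolding reach_def by blast
  from y(3) show "v \<in> P"
  proof (induction rule: rtrancl_induct)
    case base then show ?case using y assms(1) by blast
  next
    case (step u w) then show ?case using assms(2)[of u w] by blast
  qed
qed

lemma NR_iff: "v \<in> NR G Y K \<longleftrightarrow> v \<in> verts G \<and> v \<notin> K \<and> v \<notin> reach G Y K"
  by (auto simp: NR_def)

definition sep_meet :: "'a graph \<Rightarrow> 'a set \<Rightarrow> 'a set \<Rightarrow> 'a set \<Rightarrow> 'a set" where
  "sep_meet G Y K1 K2 = (K1 \<inter> K2) \<union> (K1 \<inter> NR G Y K2) \<union> (K2 \<inter> NR G Y K1)"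

definition sep_join :: "'a graph \<Rightarrow> 'a set \<Rightarrow> 'a set \<Rightarrow> 'a set \<Rightarrow> 'a set" where
  "sep_join G Y K1 K2 = (K1 \<inter> K2) \<union> (K1 \<inter> reach G Y K2) \<union> (K2 \<inter> reach G Y K1)"

lemma reach_sep_meet_disjoint_NR:
  "reach G Y (sep_meet G Y K1 K2) \<inter> (NR G Y K1 \<inter> NR G Y K2) = {}"
proof -
  let ?M = "sep_meet G Y K1 K2"
  have "reach G Y ?M \<subseteq> - (NR G Y K1 \<inter> NR G Y K2)"
  proof (rule reach_induct)
    fix y assume "y \<in> Y" "y \<in> verts G - ?M"
    then have "y \<notin> NR G Y K1"
      using source_in_reach[of y Y G K1] by (auto simp: NR_iff)
    then show "y \<in> - (NR G Y K1 \<inter> NR G Y K2)" by blast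
  next
    fix u v assume u: "u \<in> - (NR G Y K1 \<inter> NR G Y K2)" "u \<in> verts G - ?M"
      and e: "(u, v) \<in> edges G"
    show "v \<in> - (NR G Y K1 \<inter> NR G Y K2)"
    proof
      assume "v \<in> NR G Y K1 \<inter> NR G Y K2"
      then have "u \<notin> reach G Y K1" "u \<notin> reach G Y K2"
        using reach_edge[OF _ e] by (meson IntD1 IntD2 NR_iff)+
      moreover have "u \<in> verts G" "u \<notin> ?M" using u(2) by blast+
      ultimately have "u \<in> K1 \<or> u \<in> NR G Y K1" "u \<in> K2 \<or> u \<in> NR G Y K2"
        by (simp_all add: NR_iff)
      with \<open>u \<notin> ?M\<close> u(1) show False unfolding sep_meet_def by blast
    qed
  qed
  then show ?thesis by blast
qed

lemma separator_sep_meet: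
  assumes "separator G X Y K1" "separator G X Y K2"
  shows "separator G X Y (sep_meet G Y K1 K2)"
proof -
  have K1: "K1 \<subseteq> verts G - (X \<union> Y)" "X \<inter> reach G Y K1 = {}"
    and K2: "K2 \<subseteq> verts G - (X \<union> Y)" "X \<inter> reach G Y K2 = {}"
    using assms by (simp_all add: separator_def)
  have "x \<notin> reach G Y (sep_meet G Y K1 K2)" if "x \<in> X" for x
  proof
    assume x: "x \<in> reach G Y (sep_meet G Y K1 K2)"
    then have "x \<in> verts G" using reach_subset by fast
    with that K1 K2 have "x \<in> NR G Y K1 \<inter> NR G Y K2"
      unfolding NR_def by fast
    with x reach_sep_meet_disjoint_NR show False by fast
  qed
  moreover have "sep_meet G Y K1 K2 \<subseteq> K1 \<union> K2"
    unfolding sep_meet_def by fast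
  ultimately show ?thesis
    using K1 K2 unfolding separator_def by fast
qed

lemma reach_sep_join_subset:
  assumes "Y \<inter> (K1 \<union> K2) = {}"
  shows "reach G Y (sep_join G Y K1 K2) \<subseteq> reach G Y K1 \<inter> reach G Y K2"
proof (rule reach_induct)
  fix y assume "y \<in> Y" "y \<in> verts G - sep_join G Y K1 K2"
  moreover have "y \<notin> K1" "y \<notin> K2" using \<open>y \<in> Y\<close> assms by blast+
  ultimately show "y \<in> reach G Y K1 \<inter> reach G Y K2"
    by (simp add: source_in_reach)
next
  fix u v assume u: "u \<in> reach G Y K1 \<inter> reach G Y K2"
    and v: "v \<in> verts G - sep_join G Y K1 K2" and e: "(u, v) \<in> edges G"
  have reach_v: "v \<in> reach G Y K" if "u \<in> reach G Y K" "v \<notin> K" for K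
    using reach_edge[OF that(1) e] v that(2) by blast
  have not_join: "v \<notin> K1 \<inter> K2" "v \<notin> K1 \<inter> reach G Y K2" "v \<notin> K2 \<inter> reach G Y K1"
    using v unfolding sep_join_def by blast+
  \<comment> \<open>a vertex of K1 - K2 adjacent to u is reached for K2, hence lies in the join\<close>
  have "v \<notin> K1"
  proof
    assume "v \<in> K1"
    with not_join(1) have "v \<in> reach G Y K2" using u reach_v by blast
    with \<open>v \<in> K1\<close> not_join(2) show False by blast
  qed
  moreover have "v \<notin> K2"
  proof
    assume "v \<in> K2"
    with not_join(1) \<open>v \<notin> K1\<close> have "v \<in> reach G Y K1" using u reach_v by blast
    with \<open>v \<in> K2\<close> not_join(3) show False by blast
  qed
  ultimately show "v \<in> reach G Y K1 \<inter> reach G Y K2"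
    using u reach_v by blast
qed

lemma separator_sep_join:
  assumes "separator G X Y K1" "separator G X Y K2"
  shows "separator G X Y (sep_join G Y K1 K2)"
    and "NR G Y K1 \<union> NR G Y K2 \<subseteq> NR G Y (sep_join G Y K1 K2)"
proof -
  have K1: "K1 \<subseteq> verts G - (X \<union> Y)" "X \<inter> reach G Y K1 = {}"
    and K2: "K2 \<subseteq> verts G - (X \<union> Y)"
    using assms by (simp_all add: separator_def)
  then have r: "reach G Y (sep_join G Y K1 K2) \<subseteq> reach G Y K1 \<inter> reach G Y K2"
    by (intro reach_sep_join_subset) fast
  have "sep_join G Y K1 K2 \<subseteq> K1 \<union> K2"
    unfolding sep_join_def by fast
  with K1 K2 r show "separator G X Y (sep_join G Y K1 K2)"
    unfolding separator_def by fast
  from r show "NR G Y K1 \<union> NR G Y K2 \<subseteq> NR G Y (sep_join G Y K1 K2)"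
    unfolding NR_def sep_join_def by fast
qed

lemma card_sep_meet_add_sep_join:
  assumes "finite K1" "finite K2" "K1 \<subseteq> verts G" "K2 \<subseteq> verts G"
  shows "card (sep_meet G Y K1 K2) + card (sep_join G Y K1 K2) = card K1 + card K2"
proof -
  let ?M = "sep_meet G Y K1 K2" and ?J = "sep_join G Y K1 K2"
  have "K1 - K2 \<subseteq> NR G Y K2 \<union> reach G Y K2" "K2 - K1 \<subseteq> NR G Y K1 \<union> reach G Y K1"
    using assms(3,4) unfolding NR_def by blast+
  then have "?M \<union> ?J = K1 \<union> K2"
    unfolding sep_meet_def sep_join_def by blast
  moreover have "?M \<inter> ?J = K1 \<inter> K2"
    unfolding sep_meet_def sep_join_def NR_def by blast
  moreover have "finite ?M" "finite ?J"
    using assms(1,2) unfolding sep_meet_def sep_join_def by blast+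
  ultimately show ?thesis
    using card_Un_Int[of ?M ?J] card_Un_Int[OF assms(1,2)] by simp
qed

lemma sep_num_le_card:
  assumes "finite (verts G)" "separator G X Y K"
  shows "sep_num G X Y \<le> card K"
proof -
  have "{card K | K. separator G X Y K} \<subseteq> card ` Pow (verts G)"
    unfolding separator_def by blast
  then have "finite {card K | K. separator G X Y K}"
    by (rule finite_subset) (simp add: assms(1))
  moreover have "card K \<in> {card K | K. separator G X Y K}"
    using assms(2) by blast
  ultimately show ?thesis
    unfolding sep_num_def by (rule Min_le)
qed

lemma cover_excess_le_excess:
  assumes "finite (verts G)" "separator G X Y K" "K \<inter> S = {}"
  shows "cover_excess G X Y S \<le> excess G X Y K"
proof -
  have "{excess G X Y K | K. separator G X Y K \<and> K \<inter> S = {}} \<subseteq> excess G X Y ` Pow (verts G)"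
    unfolding separator_def by blast
  then have "finite {excess G X Y K | K. separator G X Y K \<and> K \<inter> S = {}}"
    by (rule finite_subset) (simp add: assms(1))
  moreover have "excess G X Y K \<in> {excess G X Y K | K. separator G X Y K \<and> K \<inter> S = {}}"
    using assms(2,3) by blast
  ultimately show ?thesis
    unfolding cover_excess_def by (rule Min_le)
qed

lemma witness_card_le:
  assumes "finite (verts G)" "witness G X Y S K" "separator G X Y K'" "K' \<inter> S = {}"
  shows "card K \<le> card K'"
proof -
  have "card K - sep_num G X Y \<le> card K' - sep_num G X Y"
    using assms(2) cover_excess_le_excess[OF assms(1,3,4)]
    by (simp add: witness_def excess_def)
  moreover have "sep_num G X Y \<le> card K'"
    by (rule sep_num_le_card[OF assms(1,3)])
  ultimately show ?thesis by arith
qed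

lemma NR_witness_subset_NR_important_witness:
  assumes fin: "finite (verts G)"
    and w1: "witness G X Y S K1" and imp: "important G X Y K1"
    and w2: "witness G X Y S K2"
  shows "NR G Y K2 \<subseteq> NR G Y K1"
proof -
  have s1: "separator G X Y K1" "K1 \<inter> S = {}" and s2: "separator G X Y K2" "K2 \<inter> S = {}"
    using w1 w2 by (simp_all add: witness_def)
  have sub: "K1 \<subseteq> verts G" "K2 \<subseteq> verts G"
    using s1 s2 unfolding separator_def by blast+
  then have "finite K1" "finite K2"
    using fin by (simp_all add: finite_subset)
  then have card_sum: "card (sep_meet G Y K1 K2) + card (sep_join G Y K1 K2) = card K1 + card K2"
    by (rule card_sep_meet_add_sep_join[OF _ _ sub])
  have "sep_meet G Y K1 K2 \<inter> S = {}"
    using s1(2) s2(2) unfolding sep_meet_def by blast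
  then have "card K1 \<le> card (sep_meet G Y K1 K2)"
    by (rule witness_card_le[OF fin w1 separator_sep_meet[OF s1(1) s2(1)]])
  moreover have "card K2 \<le> card K1"
    by (rule witness_card_le[OF fin w2 s1])
  ultimately have "card (sep_join G Y K1 K2) \<le> card K1"
    using card_sum by linarith
  then have "\<not> NR G Y K1 \<subset> NR G Y (sep_join G Y K1 K2)"
    using imp separator_sep_join(1)[OF s1(1) s2(1)] unfolding important_def by blast
  then show ?thesis
    using separator_sep_join(2)[OF s1(1) s2(1)] by blast
qed

lemma minimal_separator_eq_if_NR_eq:
  assumes "minimal_separator G X Y K1" "minimal_separator G X Y K2"
    and "NR G Y K1 = NR G Y K2"
  shows "K1 = K2"
proof -
  have disjoint: "K \<inter> NR G Y K = {}" for K
    unfolding NR_def by blast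
  have "sep_meet G Y K1 K2 = K1 \<inter> K2"
    using disjoint[of K1, unfolded assms(3)] disjoint[of K2, folded assms(3)]
    unfolding sep_meet_def by blast
  then have "separator G X Y (K1 \<inter> K2)"
    using assms(1,2) separator_sep_meet[of G X Y K1 K2]
    unfolding minimal_separator_def by simp
  then have "\<not> K1 \<inter> K2 \<subset> K1" "\<not> K1 \<inter> K2 \<subset> K2"
    using assms(1,2) unfolding minimal_separator_def by blast+
  then show ?thesis by blast
qed

lemma is_KS_unique:
  assumes fin: "finite (verts G)" and "is_KS G X Y S K1" "is_KS G X Y S K2"
  shows "K1 = K2"
proof -
  have w: "witness G X Y S K1" "witness G X Y S K2"
    and imp: "important G X Y K1" "important G X Y K2"
    using assms(2,3) by (simp_all add: is_KS_def)
  have "NR G Y K1 = NR G Y K2"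
    using NR_witness_subset_NR_important_witness[OF fin w(2) imp(2) w(1)]
      NR_witness_subset_NR_important_witness[OF fin w(1) imp(1) w(2)]
    by (rule subset_antisym)
  moreover have "minimal_separator G X Y K1" "minimal_separator G X Y K2"
    using imp by (simp_all add: important_def)
  ultimately show ?thesis
    using minimal_separator_eq_if_NR_eq by blast
qed

lemma finite_verts_Pr: "finite (verts G) \<Longrightarrow> finite (verts (Pr G X Y K))"
  by (simp add: Pr_def verts_def Let_def)

lemma compound_witness_unique:
  "finite (verts G) \<Longrightarrow> compound_witness G X Y Ss K1 \<Longrightarrow> compound_witness G X Y Ss K2 \<Longrightarrow> K1 = K2"
proof (induction G X Y Ss K1 arbitrary: K2 rule: compound_witness.induct)
  case (2 G X Y S K1)
  then show ?case using is_KS_unique by simp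
next
  case (3 G X Y S S' Ss K1)
  from "3.prems"(2) obtain A where A: "is_KS G X Y S A" "compound_witness (Pr G X Y A) X Y (S' # Ss) K1"
    by auto
  from "3.prems"(3) obtain B where B: "is_KS G X Y S B" "compound_witness (Pr G X Y B) X Y (S' # Ss) K2"
    by auto
  have "A = B" using is_KS_unique[OF "3.prems"(1) A(1) B(1)] .
  with A B "3.prems"(1) show ?case
    using "3.IH" finite_verts_Pr by blast
qed simp

theorem corollary2:
  fixes G :: "'a graph" and X Y :: "'a set" and Ss :: "'a set list"
  assumes "fin_graph G"
    and "X \<subseteq> verts G" and "Y \<subseteq> verts G" and "X \<inter> Y = {}"
    and "normalized G X Y"
    and "\<forall>i < length Ss. Ss ! i \<noteq> {} \<and> Ss ! i \<subseteq> verts G"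
    and "\<forall>i < length Ss. \<forall>j < length Ss. i \<noteq> j \<longrightarrow> Ss ! i \<inter> Ss ! j = {}"
  shows "\<forall>K1 K2. compound_witness G X Y Ss K1 \<and> compound_witness G X Y Ss K2 \<longrightarrow> K1 = K2"
  using compound_witness_unique assms(1) unfolding fin_graph_def by blast

end
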